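(* Let $k\ge2$, $0\le\alpha<1$, and let $G$ be a connected $k$-uniform hypergraph. Let $r\ge1$, let $u,v_1,\dots,v_r\in V(G)$ (the $v_i$ not necessarily distinct) and let $e_1,\dots,e_r$ be pairwise distinct edges of $G$ with $u\notin e_i$ and $v_i\in e_i$ for $i=1,\dots,r$. Let $e_i'=(e_i\setminus\{v_i\})\cup\{u\}$, and suppose that $e_1',\dots,e_r'$ are pairwise distinct and $e_i'\notin E(G)$ for all $i$. Let $G'$ be the hypergraph obtained from $G$ by deleting the edges $e_1,\dots,e_r$ and adding the edges $e_1',\dots,e_r'$. Let $x$ be the $\alpha$-Perron vector of $G$. If $x_u\ge\max\{x_{v_1},\dots,x_{v_r}\}$, then $\rho_\alpha(G')>\rho_\alpha(G)$.
   Context: Hypergraphs are finite with edges being sets; $k$-uniform means every edge has $k$ vertices; $d_v$ is the number of edges containing $v$. $\mathcal A(G)$ is the order-$k$ dimension-$n$ tensor with $(i_1,\dots,i_k)$-entry $\frac1{(k-1)!}$ if $\{i_1,\dots,i_k\}\in E(G)$, $0$ otherwise; $\mathcal D(G)$ is the diagonal tensor of degrees; $\mathcal A_\alpha(G)=\alpha\mathcal D(G)+(1-\alpha)\mathcal A(G)$. For an order-$k$ tensor $\mathcal T$, $(\mathcal Tx)_i=\sum_{i_2,\dots,i_k}\mathcal T_{ii_2\dots i_k}x_{i_2}\cdots x_{i_k}$; $\lambda$ is an eigenvalue if $\mathcal Tx=\lambda x^{[k-1]}$ for some $x\ne0$, $x^{[k-1]}=(x_i^{k-1})_i$. $\rho_\alpha(G)$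 is the largest modulus of an eigenvalue of $\mathcal A_\alpha(G)$. A path is an alternating sequence of distinct vertices and distinct edges $(v_0,e_1,\dots,e_s,v_s)$ with $v_{i-1},v_i\in e_i$; connected means any two vertices are joined by a path. For connected $G$, the $\alpha$-Perron vector is the unique entrywise positive $x$ with $\sum_i x_i^k=1$ and $\mathcal A_\alpha(G)x=\rho_\alpha(G)x^{[k-1]}$. *)

theory Defs
  imports Complex_Main
begin

definition k_uniform :: "nat \<Rightarrow> 'a set \<Rightarrow> 'a set set \<Rightarrow> bool" where
  "k_uniform k V E \<longleftrightarrow> finite V \<and> (\<forall>e\<in>E. e \<subseteq> V \<and> card e = k)"

definition hpath :: "'a set set \<Rightarrow> 'a list \<Rightarrow> 'a set list \<Rightarrow> bool" where
  "hpath E vs es \<longleftrightarrow> vs \<noteq> [] \<and> length es + 1 = length vs \<and> distinct vs \<and> distinct es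
     \<and> set es \<subseteq> E \<and> (\<forall>i<length es. vs ! i \<in> es ! i \<and> vs ! (Suc i) \<in> es ! i)"

definition hconnected :: "'a set \<Rightarrow> 'a set set \<Rightarrow> bool" where
  "hconnected V E \<longleftrightarrow> (\<forall>u\<in>V. \<forall>w\<in>V. \<exists>vs es. hpath E vs es \<and> hd vs = u \<and> last vs = w)"

definition hdegree :: "'a set set \<Rightarrow> 'a \<Rightarrow> nat" where
  "hdegree E v = card {e\<in>E. v \<in> e}"

text \<open>Order-k tensors with index set V are functions on index lists of length k.\<close>

definition adj_tensor :: "nat \<Rightarrow> 'a set set \<Rightarrow> 'a list \<Rightarrow> real" where
  "adj_tensor k E is = (if set is \<in> E then 1 / fact (k - 1) else 0)"

definition deg_tensor :: "'a set set \<Rightarrow> 'a list \<Rightarrow> real" where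
  "deg_tensor E is = (if is \<noteq> [] \<and> (\<forall>j\<in>set is. j = hd is) then real (hdegree E (hd is)) else 0)"

definition A_alpha_tensor :: "real \<Rightarrow> nat \<Rightarrow> 'a set set \<Rightarrow> 'a list \<Rightarrow> real" where
  "A_alpha_tensor \<alpha> k E is = \<alpha> * deg_tensor E is + (1 - \<alpha>) * adj_tensor k E is"

definition tensor_apply ::
  "('a list \<Rightarrow> real) \<Rightarrow> 'a set \<Rightarrow> nat \<Rightarrow> ('a \<Rightarrow> 'b::real_algebra_1) \<Rightarrow> 'a \<Rightarrow> 'b" where
  "tensor_apply T V k x i =
     (\<Sum>l\<in>{l. set l \<subseteq> V \<and> length l = k - 1}. of_real (T (i # l)) * prod_list (map x l))"

definition tensor_eigenvalue ::
  "('a list \<Rightarrow> real) \<Rightarrow> 'a set \<Rightarrow> nat \<Rightarrow> complex \<Rightarrow> bool" where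
  "tensor_eigenvalue T V k mu \<longleftrightarrow>
     (\<exists>x :: 'a \<Rightarrow> complex. (\<exists>i\<in>V. x i \<noteq> 0) \<and>
        (\<forall>i\<in>V. tensor_apply T V k x i = mu * x i ^ (k - 1)))"

definition rho_alpha :: "real \<Rightarrow> nat \<Rightarrow> 'a set \<Rightarrow> 'a set set \<Rightarrow> real" where
  "rho_alpha \<alpha> k V E = Sup {cmod mu | mu. tensor_eigenvalue (A_alpha_tensor \<alpha> k E) V k mu}"

definition alpha_perron_vector ::
  "real \<Rightarrow> nat \<Rightarrow> 'a set \<Rightarrow> 'a set set \<Rightarrow> ('a \<Rightarrow> real) \<Rightarrow> bool" where
  "alpha_perron_vector \<alpha> k V E x \<longleftrightarrow>
     (\<forall>i\<in>V. x i > 0) \<and> (\<Sum>i\<in>V. x i ^ k) = 1 \<and>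
     (\<forall>i\<in>V. tensor_apply (A_alpha_tensor \<alpha> k E) V k x i = rho_alpha \<alpha> k V E * x i ^ (k - 1))"

end

theory Submission
  imports Defs "HOL-Combinatorics.Multiset_Permutations" "HOL-Analysis.Analysis"
begin

text \<open>For a \<open>k\<close>-uniform hypergraph, \<open>x\<^sup>T(\<A>\<^sub>\<alpha> x) = \<Sum>\<^sub>e (\<alpha> \<Sum>\<^sub>i\<^sub>\<in>\<^sub>e x\<^sub>i\<^sup>k + (1 - \<alpha>) k \<Prod>\<^sub>i\<^sub>\<in>\<^sub>e x\<^sub>i)\<close>.
  This form attains its maximum on the nonnegative unit sphere \<open>\<Sum> x\<^sub>i\<^sup>k = 1\<close>, and by the Lagrange
  condition every maximizer is a real eigenvector whose eigenvalue is the maximum. Hence the form is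
  at most \<open>\<rho>\<^sub>\<alpha>\<close> on the sphere, and any point where it equals \<open>\<rho>\<^sub>\<alpha>\<close> is an eigenvector for \<open>\<rho>\<^sub>\<alpha>\<close>.

  At the Perron vector \<open>x\<close> of \<open>G\<close> the form of \<open>G\<close> equals \<open>\<rho>\<^sub>\<alpha>(G)\<close>. Since \<open>x\<^sub>u \<ge> x\<^sub>v\<^sub>i\<close>, replacing \<open>v\<^sub>i\<close> by
  \<open>u\<close> in \<open>e\<^sub>i\<close> does not decrease any edge term, so \<open>\<rho>\<^sub>\<alpha>(G) \<le> x\<^sup>T(\<A>\<^sub>\<alpha>(G') x) \<le> \<rho>\<^sub>\<alpha>(G')\<close>. Equality would
  make \<open>x\<close> an eigenvector of \<open>\<A>\<^sub>\<alpha>(G')\<close> for \<open>\<rho>\<^sub>\<alpha>(G)\<close>; but the coordinate \<open>u\<close> of \<open>\<A>\<^sub>\<alpha>(G') x\<close> strictly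
  exceeds that of \<open>\<A>\<^sub>\<alpha>(G) x\<close>, because \<open>u\<close> lies in the new edges.\<close>

section \<open>The tensor action in closed form\<close>

lemma k_uniform_finite_vertices: "k_uniform k V E \<Longrightarrow> finite V"
  by (simp add: k_uniform_def)

lemma k_uniform_edge_subset: "k_uniform k V E \<Longrightarrow> e \<in> E \<Longrightarrow> e \<subseteq> V"
  by (simp add: k_uniform_def)

lemma k_uniform_card_edge: "k_uniform k V E \<Longrightarrow> e \<in> E \<Longrightarrow> card e = k"
  by (simp add: k_uniform_def)

lemma k_uniform_finite_edge: "k_uniform k V E \<Longrightarrow> e \<in> E \<Longrightarrow> finite e"
  by (meson k_uniform_edge_subset k_uniform_finite_vertices finite_subset)

lemma k_uniform_finite_edges: "k_uniform k V E \<Longrightarrow> finite E"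
  by (meson k_uniform_edge_subset k_uniform_finite_vertices finite_Pow_iff finite_subset PowI subsetI)

definition A_alpha_apply :: "real \<Rightarrow> 'a set set \<Rightarrow> nat \<Rightarrow> ('a \<Rightarrow> 'b::real_field) \<Rightarrow> 'a \<Rightarrow> 'b" where
  "A_alpha_apply \<alpha> E k z i = of_real \<alpha> * of_nat (hdegree E i) * z i ^ (k - 1)
      + of_real (1 - \<alpha>) * (\<Sum>e\<in>{e\<in>E. i \<in> e}. prod z (e - {i}))"

lemma tensor_apply_lincomb:
  "tensor_apply (\<lambda>is. a * S is + b * T is) V k z i
     = of_real a * tensor_apply S V k z i + of_real b * tensor_apply T V k z i"
  unfolding tensor_apply_def by (simp add: sum.distrib sum_distrib_left algebra_simps)

lemma tensor_apply_deg_tensor: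
  assumes "finite V" "i \<in> V"
  shows "tensor_apply (deg_tensor E) V k z i = of_nat (hdegree E i) * z i ^ (k - 1)"
proof -
  let ?L = "{l. set l \<subseteq> V \<and> length l = k - 1}"
  have "deg_tensor E (i # l) = (if l = replicate (k - 1) i then real (hdegree E i) else 0)"
    if "l \<in> ?L" for l
    using that by (auto simp: deg_tensor_def) (metis replicate_length_same)
  then have "tensor_apply (deg_tensor E) V k z i
      = (\<Sum>l\<in>?L. if l = replicate (k - 1) i then of_nat (hdegree E i) * z i ^ (k - 1) else 0)"
    unfolding tensor_apply_def by (intro sum.cong) (auto simp: prod_list_replicate)
  also have "\<dots> = of_nat (hdegree E i) * z i ^ (k - 1)"
    using assms by (simp add: finite_lists_length_eq set_replicate_conv_if)
  finally show ?thesis .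
qed

lemma tensor_apply_adj_tensor:
  fixes z :: "'a \<Rightarrow> 'b::real_field"
  assumes uniform: "k_uniform k V E" and "k \<ge> 1"
  shows "tensor_apply (adj_tensor k E) V k z i = (\<Sum>e\<in>{e\<in>E. i \<in> e}. prod z (e - {i}))"
proof -
  let ?L = "{l. set l \<subseteq> V \<and> length l = k - 1}"
  let ?c = "of_real (1 / fact (k - 1)) :: 'b"
  have "tensor_apply (adj_tensor k E) V k z i
      = (\<Sum>l\<in>{l\<in>?L. set (i # l) \<in> E}. ?c * prod_list (map z l))"
    unfolding tensor_apply_def adj_tensor_def
    by (rule sum.mono_neutral_cong_right)
      (auto simp: finite_lists_length_eq k_uniform_finite_vertices[OF uniform])
  also have "{l\<in>?L. set (i # l) \<in> E} = (\<Union>e\<in>{e\<in>E. i \<in> e}. permutations_of_set (e - {i}))"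
  proof (intro equalityI subsetI)
    fix l assume l: "l \<in> {l\<in>?L. set (i # l) \<in> E}"
    then have card: "card (set (i # l)) = k" and len: "length l = k - 1"
      using k_uniform_card_edge[OF uniform] by auto
    have "i \<notin> set l"
    proof
      assume "i \<in> set l"
      then have "card (set (i # l)) \<le> length l"
        by (simp add: insert_absorb card_length)
      with card len \<open>k \<ge> 1\<close> show False by simp
    qed
    moreover have "distinct l"
      using card len \<open>i \<notin> set l\<close> by (simp add: card_distinct)
    ultimately show "l \<in> (\<Union>e\<in>{e\<in>E. i \<in> e}. permutations_of_set (e - {i}))"
      using l by (auto simp: permutations_of_set_def)
  next
    fix l assume "l \<in> (\<Union>e\<in>{e\<in>E. i \<in> e}. permutations_of_set (e - {i}))"
    then obtain e where e: "e \<in> E" "i \<in> e" and l: "set l = e - {i}" "distinct l"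
      by (auto simp: permutations_of_set_def)
    then have "length l = k - 1"
      using k_uniform_card_edge[OF uniform e(1)] by (metis distinct_card card_Diff_singleton
          k_uniform_finite_edge[OF uniform e(1)])
    with e l show "l \<in> {l\<in>?L. set (i # l) \<in> E}"
      using k_uniform_edge_subset[OF uniform e(1)] by (auto simp: insert_absorb)
  qed
  also have "(\<Sum>l\<in>(\<Union>e\<in>{e\<in>E. i \<in> e}. permutations_of_set (e - {i})). ?c * prod_list (map z l))
      = (\<Sum>e\<in>{e\<in>E. i \<in> e}. \<Sum>l\<in>permutations_of_set (e - {i}). ?c * prod_list (map z l))"
  proof (rule sum.UNION_disjoint)
    show "finite {e\<in>E. i \<in> e}"
      using k_uniform_finite_edges[OF uniform] by simp
    show "\<forall>e\<in>{e\<in>E. i \<in> e}. \<forall>e'\<in>{e\<in>E. i \<in> e}. e \<noteq> e' \<longrightarrow>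
        permutations_of_set (e - {i}) \<inter> permutations_of_set (e' - {i}) = {}"
    proof (intro ballI impI)
      fix e e' assume "e \<in> {e\<in>E. i \<in> e}" "e' \<in> {e\<in>E. i \<in> e}" "e \<noteq> e'"
      then have "e - {i} \<noteq> e' - {i}"
        by (metis (no_types, lifting) insert_Diff mem_Collect_eq)
      then show "permutations_of_set (e - {i}) \<inter> permutations_of_set (e' - {i}) = {}"
        unfolding permutations_of_set_def by blast
    qed
  qed simp
  also have "\<dots> = (\<Sum>e\<in>{e\<in>E. i \<in> e}. prod z (e - {i}))"
  proof (rule sum.cong[OF refl])
    fix e assume e: "e \<in> {e\<in>E. i \<in> e}"
    have "(\<Sum>l\<in>permutations_of_set (e - {i}). ?c * prod_list (map z l))
        = (\<Sum>l\<in>permutations_of_set (e - {i}). ?c * prod z (e - {i}))"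
      by (intro sum.cong) (auto simp: permutations_of_set_def prod.distinct_set_conv_list[symmetric])
    also have "\<dots> = of_real (fact (k - 1) * (1 / fact (k - 1))) * prod z (e - {i})"
    proof -
      have "finite (e - {i})" "card (e - {i}) = k - 1"
        using e k_uniform_card_edge[OF uniform] k_uniform_finite_edge[OF uniform] by auto
      then show ?thesis
        by (simp only: sum_constant card_permutations_of_set of_real_mult of_real_of_nat_eq
            of_nat_fact of_real_fact mult.assoc)
    qed
    finally show "(\<Sum>l\<in>permutations_of_set (e - {i}). ?c * prod_list (map z l)) = prod z (e - {i})"
      by simp
  qed
  finally show ?thesis .
qed

lemma tensor_apply_A_alpha_tensor:
  fixes z :: "'a \<Rightarrow> 'b::real_field"
  assumes "k_uniform k V E" "k \<ge> 1" "i \<in> V"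
  shows "tensor_apply (A_alpha_tensor \<alpha> k E) V k z i = A_alpha_apply \<alpha> E k z i"
proof -
  have "A_alpha_tensor \<alpha> k E = (\<lambda>is. \<alpha> * deg_tensor E is + (1 - \<alpha>) * adj_tensor k E is)"
    by (simp add: fun_eq_iff A_alpha_tensor_def)
  then show ?thesis
    using assms k_uniform_finite_vertices[OF assms(1)]
    by (simp add: tensor_apply_lincomb tensor_apply_deg_tensor tensor_apply_adj_tensor
        A_alpha_apply_def)
qed

lemma A_alpha_apply_of_real:
  "A_alpha_apply \<alpha> E k (\<lambda>i. of_real (y i) :: 'b::real_field) j = of_real (A_alpha_apply \<alpha> E k y j)"
  by (simp add: A_alpha_apply_def of_real_sum of_real_prod)

lemma norm_prod_list_map_le:
  fixes x :: "'a \<Rightarrow> 'b::real_normed_div_algebra"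
  assumes "set l \<subseteq> V" "\<forall>i\<in>V. norm (x i) \<le> m"
  shows "norm (prod_list (map x l)) \<le> m ^ length l"
  using assms
proof (induction l)
  case (Cons a l)
  then have "norm (x a) * norm (prod_list (map x l)) \<le> m * m ^ length l"
    by (intro mult_mono) (auto intro: order_trans[OF norm_ge_zero])
  then show ?case by (simp add: norm_mult)
qed simp

lemma bdd_above_tensor_eigenvalue_norms:
  assumes "finite V"
  shows "bdd_above {cmod mu | mu. tensor_eigenvalue T V k mu}"
proof -
  let ?L = "{l. set l \<subseteq> V \<and> length l = k - 1}"
  have "cmod mu \<le> (\<Sum>i\<in>V. \<Sum>l\<in>?L. \<bar>T (i # l)\<bar>)" if eig: "tensor_eigenvalue T V k mu" for mu
  proof -
    obtain x where nz: "\<exists>i\<in>V. x i \<noteq> 0"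
      and eq: "\<forall>i\<in>V. tensor_apply T V k x i = mu * x i ^ (k - 1)"
      using eig unfolding tensor_eigenvalue_def by blast
    \<comment> \<open>Evaluate the eigen-equation at a coordinate of maximal modulus.\<close>
    define m where "m = Max ((\<lambda>i. cmod (x i)) ` V)"
    have "m \<in> (\<lambda>i. cmod (x i)) ` V"
      unfolding m_def using assms nz by (intro Max_in) auto
    then obtain i0 where i0: "i0 \<in> V" "cmod (x i0) = m"
      by blast
    have m_ge: "\<forall>i\<in>V. cmod (x i) \<le> m"
      unfolding m_def using assms by auto
    have "m > 0"
      using nz m_ge by (meson less_le_trans zero_less_norm_iff)
    have "cmod mu * m ^ (k - 1) = cmod (tensor_apply T V k x i0)"
      using eq i0 by (simp add: norm_mult norm_power)
    also have "\<dots> \<le> (\<Sum>l\<in>?L. cmod (of_real (T (i0 # l)) * prod_list (map x l)))"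
      unfolding tensor_apply_def by (rule norm_sum)
    also have "\<dots> \<le> (\<Sum>l\<in>?L. \<bar>T (i0 # l)\<bar> * m ^ (k - 1))"
    proof (rule sum_mono)
      fix l assume "l \<in> ?L"
      then have "cmod (prod_list (map x l)) \<le> m ^ (k - 1)"
        using norm_prod_list_map_le[OF _ m_ge, of l] by simp
      then show "cmod (of_real (T (i0 # l)) * prod_list (map x l)) \<le> \<bar>T (i0 # l)\<bar> * m ^ (k - 1)"
        by (simp add: norm_mult mult_left_mono)
    qed
    also have "\<dots> = (\<Sum>l\<in>?L. \<bar>T (i0 # l)\<bar>) * m ^ (k - 1)"
      by (simp add: sum_distrib_right)
    finally have "cmod mu \<le> (\<Sum>l\<in>?L. \<bar>T (i0 # l)\<bar>)"
      using \<open>m > 0\<close> by simp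
    also have "\<dots> \<le> (\<Sum>i\<in>V. \<Sum>l\<in>?L. \<bar>T (i # l)\<bar>)"
      using i0(1) assms by (intro member_le_sum) (auto intro: sum_nonneg)
    finally show ?thesis .
  qed
  then show ?thesis
    unfolding bdd_above_def by blast
qed

lemma real_eigenpair_le_rho_alpha:
  assumes "k_uniform k V E" "k \<ge> 1" "\<exists>i\<in>V. y i \<noteq> 0"
    and "\<forall>j\<in>V. A_alpha_apply \<alpha> E k y j = M * y j ^ (k - 1)"
  shows "M \<le> rho_alpha \<alpha> k V E"
proof -
  have "tensor_eigenvalue (A_alpha_tensor \<alpha> k E) V k (complex_of_real M)"
    unfolding tensor_eigenvalue_def
  proof (intro exI conjI)
    show "\<exists>i\<in>V. complex_of_real (y i) \<noteq> 0"
      using assms(3) by auto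
    show "\<forall>i\<in>V. tensor_apply (A_alpha_tensor \<alpha> k E) V k (\<lambda>i. complex_of_real (y i)) i =
          complex_of_real M * complex_of_real (y i) ^ (k - 1)"
      using assms(4) by (simp add: tensor_apply_A_alpha_tensor[OF assms(1,2)] A_alpha_apply_of_real)
  qed
  then have "cmod (complex_of_real M) \<le> rho_alpha \<alpha> k V E"
    unfolding rho_alpha_def
    by (intro cSup_upper bdd_above_tensor_eigenvalue_norms k_uniform_finite_vertices[OF assms(1)])
      blast
  then show ?thesis by simp
qed

section \<open>The form \<open>x\<^sup>T(\<A>\<^sub>\<alpha> x)\<close>\<close>

definition A_alpha_edge_term :: "real \<Rightarrow> nat \<Rightarrow> ('a \<Rightarrow> real) \<Rightarrow> 'a set \<Rightarrow> real" where
  "A_alpha_edge_term \<alpha> k z e = \<alpha> * (\<Sum>i\<in>e. z i ^ k) + (1 - \<alpha>) * real k * prod z e"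

definition A_alpha_form :: "real \<Rightarrow> 'a set set \<Rightarrow> nat \<Rightarrow> ('a \<Rightarrow> real) \<Rightarrow> real" where
  "A_alpha_form \<alpha> E k z = (\<Sum>e\<in>E. A_alpha_edge_term \<alpha> k z e)"

lemma sum_incident_edges_swap:
  assumes "finite V" "finite E" "\<forall>e\<in>E. e \<subseteq> V"
  shows "(\<Sum>i\<in>V. \<Sum>e\<in>{e\<in>E. i \<in> e}. f i e) = (\<Sum>e\<in>E. \<Sum>i\<in>e. f i e)"
proof -
  have "(\<Sum>i\<in>V. \<Sum>e\<in>{e\<in>E. i \<in> e}. f i e) = (\<Sum>i\<in>V. \<Sum>e\<in>E. if i \<in> e then f i e else 0)"
    using assms by (simp add: sum.inter_filter)
  also have "\<dots> = (\<Sum>e\<in>E. \<Sum>i\<in>V. if i \<in> e then f i e else 0)"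
    by (rule sum.swap)
  also have "\<dots> = (\<Sum>e\<in>E. \<Sum>i\<in>e. f i e)"
    using assms by (intro sum.cong refl sum.mono_neutral_cong_right) auto
  finally show ?thesis .
qed

lemma sum_mult_A_alpha_apply:
  assumes uniform: "k_uniform k V E" and "k \<ge> 1"
  shows "(\<Sum>i\<in>V. z i * A_alpha_apply \<alpha> E k z i) = A_alpha_form \<alpha> E k z"
proof -
  have "z i * A_alpha_apply \<alpha> E k z i = (\<Sum>e\<in>{e\<in>E. i \<in> e}. \<alpha> * z i ^ k + (1 - \<alpha>) * prod z e)"
    for i
  proof -
    have "z i * z i ^ (k - 1) = z i ^ k"
      using \<open>k \<ge> 1\<close> by (simp add: power_eq_if)
    moreover have "(\<Sum>e\<in>{e\<in>E. i \<in> e}. z i * prod z (e - {i})) = (\<Sum>e\<in>{e\<in>E. i \<in> e}. prod z e)"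
      using k_uniform_finite_edge[OF uniform] by (intro sum.cong) (auto simp: prod.remove)
    moreover have "z i * A_alpha_apply \<alpha> E k z i = \<alpha> * real (hdegree E i) * (z i * z i ^ (k - 1))
        + (1 - \<alpha>) * (\<Sum>e\<in>{e\<in>E. i \<in> e}. z i * prod z (e - {i}))"
      unfolding A_alpha_apply_def by (simp add: sum_distrib_left distrib_left mult_ac)
    ultimately show ?thesis
      by (simp add: sum.distrib sum_distrib_left hdegree_def mult_ac)
  qed
  then have "(\<Sum>i\<in>V. z i * A_alpha_apply \<alpha> E k z i)
      = (\<Sum>e\<in>E. \<Sum>i\<in>e. \<alpha> * z i ^ k + (1 - \<alpha>) * prod z e)"
    using uniform by (simp add: sum_incident_edges_swap k_uniform_finite_vertices
        k_uniform_finite_edges k_uniform_edge_subset)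
  also have "\<dots> = A_alpha_form \<alpha> E k z"
    unfolding A_alpha_form_def A_alpha_edge_term_def
    using k_uniform_card_edge[OF uniform]
    by (intro sum.cong refl) (simp add: sum.distrib sum_distrib_left)
  finally show ?thesis .
qed

lemma A_alpha_form_scale:
  assumes "k_uniform k V E"
  shows "A_alpha_form \<alpha> E k (\<lambda>i. c * z i) = c ^ k * A_alpha_form \<alpha> E k z"
  unfolding A_alpha_form_def A_alpha_edge_term_def
  using k_uniform_card_edge[OF assms]
  by (simp add: sum_distrib_left power_mult_distrib prod.distrib algebra_simps)

lemma A_alpha_form_cong:
  assumes "k_uniform k V E" "\<forall>i\<in>V. z i = w i"
  shows "A_alpha_form \<alpha> E k z = A_alpha_form \<alpha> E k w"
proof -
  have "\<forall>e\<in>E. \<forall>i\<in>e. z i = w i"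
    using assms k_uniform_edge_subset[OF assms(1)] by blast
  then show ?thesis
    unfolding A_alpha_form_def A_alpha_edge_term_def by (auto intro!: sum.cong prod.cong)
qed

lemma A_alpha_apply_cong:
  assumes "k_uniform k V E" "\<forall>i\<in>V. z i = w i" "j \<in> V"
  shows "A_alpha_apply \<alpha> E k z j = A_alpha_apply \<alpha> E k w j"
proof -
  have "\<forall>e\<in>{e\<in>E. j \<in> e}. \<forall>i\<in>e - {j}. z i = w i"
    using assms k_uniform_edge_subset[OF assms(1)] by blast
  then show ?thesis
    unfolding A_alpha_apply_def using assms(2,3) by (auto intro!: sum.cong prod.cong)
qed

lemma A_alpha_edge_term_fun_upd:
  assumes "finite e"
  shows "A_alpha_edge_term \<alpha> k (z(j := z j + t)) e = A_alpha_edge_term \<alpha> k z e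
    + (if j \<in> e then \<alpha> * ((z j + t) ^ k - z j ^ k) + (1 - \<alpha>) * real k * t * prod z (e - {j})
       else 0)"
proof (cases "j \<in> e")
  case True
  with assms show ?thesis
    unfolding A_alpha_edge_term_def
    by (simp add: sum.remove[of e j] prod.remove[of e j] algebra_simps)
next
  case False
  then have "(\<Sum>i\<in>e. (z(j := z j + t)) i ^ k) = (\<Sum>i\<in>e. z i ^ k)"
    and "prod (z(j := z j + t)) e = prod z e"
    by (auto intro!: sum.cong prod.cong)
  with False show ?thesis
    unfolding A_alpha_edge_term_def by simp
qed

lemma A_alpha_form_fun_upd:
  assumes uniform: "k_uniform k V E"
  shows "A_alpha_form \<alpha> E k (z(j := z j + t)) = A_alpha_form \<alpha> E k z
    + \<alpha> * real (hdegree E j) * ((z j + t) ^ k - z j ^ k)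
    + (1 - \<alpha>) * real k * t * (\<Sum>e\<in>{e\<in>E. j \<in> e}. prod z (e - {j}))"
proof -
  have "A_alpha_form \<alpha> E k (z(j := z j + t)) = A_alpha_form \<alpha> E k z
    + (\<Sum>e\<in>E. if j \<in> e then \<alpha> * ((z j + t) ^ k - z j ^ k)
        + (1 - \<alpha>) * real k * t * prod z (e - {j}) else 0)"
    unfolding A_alpha_form_def sum.distrib[symmetric]
    by (intro sum.cong refl A_alpha_edge_term_fun_upd k_uniform_finite_edge[OF uniform])
  also have "(\<Sum>e\<in>E. if j \<in> e then \<alpha> * ((z j + t) ^ k - z j ^ k)
        + (1 - \<alpha>) * real k * t * prod z (e - {j}) else 0)
      = (\<Sum>e\<in>{e\<in>E. j \<in> e}. \<alpha> * ((z j + t) ^ k - z j ^ k)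
        + (1 - \<alpha>) * real k * t * prod z (e - {j}))"
    using k_uniform_finite_edges[OF uniform] by (simp add: sum.inter_filter)
  also have "\<dots> = \<alpha> * real (hdegree E j) * ((z j + t) ^ k - z j ^ k)
    + (1 - \<alpha>) * real k * t * (\<Sum>e\<in>{e\<in>E. j \<in> e}. prod z (e - {j}))"
    by (simp add: sum.distrib sum_distrib_left hdegree_def mult_ac)
  finally show ?thesis
    by (simp only: add.assoc)
qed

section \<open>Maximizers of the form are eigenvectors\<close>

lemma power_increment_min_at_zero:
  fixes a c B :: real
  assumes "a \<ge> 0" "k \<ge> 2" "B \<ge> 0"
    and min: "\<And>t. t \<ge> -a \<Longrightarrow> c * ((a + t) ^ k - a ^ k) - B * t \<ge> 0"
  shows "B = real k * c * a ^ (k - 1)"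
proof (cases "a > 0")
  case True
  let ?f = "\<lambda>t. c * ((a + t) ^ k - a ^ k) - B * t"
  have "(?f has_real_derivative (c * (real k * (a + 0) ^ (k - 1)) - B)) (at 0)"
    by (auto intro!: derivative_eq_intros)
  moreover have "\<forall>y. \<bar>0 - y\<bar> < a \<longrightarrow> ?f 0 \<le> ?f y"
    using min by force
  ultimately have "c * (real k * (a + 0) ^ (k - 1)) - B = 0"
    using True by (intro DERIV_local_min)
  then show ?thesis by (simp add: algebra_simps)
next
  case False
  with \<open>a \<ge> 0\<close> have "a = 0" by simp
  \<comment> \<open>At the boundary only right perturbations are allowed: \<open>B t \<le> c t^k\<close> for small \<open>t > 0\<close> forces \<open>B = 0\<close>.\<close>
  have "B = 0"
  proof (rule ccontr)
    assume "B \<noteq> 0"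
    with \<open>B \<ge> 0\<close> have "B > 0" by simp
    define t where "t = min 1 (B / (\<bar>c\<bar> + 1))"
    have "t > 0" "t \<le> 1"
      using \<open>B > 0\<close> by (auto simp: t_def)
    have "B * t \<le> c * t ^ k"
      using min[of t] \<open>t > 0\<close> \<open>a = 0\<close> \<open>k \<ge> 2\<close> by (simp add: zero_power)
    also have "\<dots> \<le> \<bar>c\<bar> * (t * t * t ^ (k - 2))"
      using \<open>t > 0\<close> \<open>k \<ge> 2\<close>
      by (metis abs_ge_self mult_right_mono less_imp_le zero_le_power power_add
          le_add_diff_inverse power2_eq_square add.commute)
    also have "\<dots> \<le> \<bar>c\<bar> * (t * t)"
      using \<open>t > 0\<close> \<open>t \<le> 1\<close> by (simp add: mult_left_mono power_le_one)
    finally have "B \<le> \<bar>c\<bar> * t"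
      using \<open>t > 0\<close> by (simp add: mult.assoc)
    also have "\<dots> \<le> \<bar>c\<bar> * (B / (\<bar>c\<bar> + 1))"
      by (rule mult_left_mono) (auto simp: t_def)
    also have "\<dots> < B"
      using \<open>B > 0\<close> by (simp add: field_simps)
    finally show False by simp
  qed
  with \<open>a = 0\<close> \<open>k \<ge> 2\<close> show ?thesis by simp
qed

text \<open>Points are set to \<open>0\<close> outside \<open>V\<close> so that the sphere is compact in the product topology.\<close>

definition nonneg_unit_sphere :: "'a set \<Rightarrow> nat \<Rightarrow> ('a \<Rightarrow> real) set" where
  "nonneg_unit_sphere V k =
     {z. (\<forall>i. i \<notin> V \<longrightarrow> z i = 0) \<and> (\<forall>i\<in>V. 0 \<le> z i) \<and> (\<Sum>i\<in>V. z i ^ k) = 1}"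

lemma restrict_mem_nonneg_unit_sphere:
  assumes "\<forall>i\<in>V. 0 \<le> z i" "(\<Sum>i\<in>V. z i ^ k) = 1"
  shows "(\<lambda>i. if i \<in> V then z i else 0) \<in> nonneg_unit_sphere V k"
  using assms by (simp add: nonneg_unit_sphere_def)

lemma compact_nonneg_unit_sphere:
  assumes "finite V" "k \<ge> 1"
  shows "compact (nonneg_unit_sphere V k)"
proof -
  define box :: "('a \<Rightarrow> real) set" where "box = PiE UNIV (\<lambda>i. if i \<in> V then {0..1} else {0})"
  have "compactin (product_topology (\<lambda>_. euclidean) UNIV) box"
    unfolding box_def by (subst compactin_PiE) auto
  then have "compact box"
    by (simp add: euclidean_product_topology)
  moreover have "closed {z::'a \<Rightarrow> real. (\<Sum>i\<in>V. z i ^ k) = 1}"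
    by (intro closed_Collect_eq continuous_intros continuous_on_product_coordinates)
  moreover have "nonneg_unit_sphere V k = box \<inter> {z. (\<Sum>i\<in>V. z i ^ k) = 1}"
  proof (intro equalityI subsetI)
    fix z assume z: "z \<in> nonneg_unit_sphere V k"
    have "z i \<le> 1" if "i \<in> V" for i
    proof -
      have "z i ^ k \<le> (\<Sum>i\<in>V. z i ^ k)"
        using z that assms(1) by (intro member_le_sum) (auto simp: nonneg_unit_sphere_def)
      then show ?thesis
        using z that \<open>k \<ge> 1\<close> by (simp add: nonneg_unit_sphere_def power_le_one_iff)
    qed
    with z show "z \<in> box \<inter> {z. (\<Sum>i\<in>V. z i ^ k) = 1}"
      unfolding box_def nonneg_unit_sphere_def by (auto simp: PiE_iff)
  qed (auto simp: box_def nonneg_unit_sphere_def PiE_iff split: if_splits)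
  ultimately show ?thesis
    by (simp add: compact_Int_closed)
qed

lemma A_alpha_form_attains_max:
  assumes uniform: "k_uniform k V E" and "k \<ge> 1" and "V \<noteq> {}"
  shows "\<exists>y\<in>nonneg_unit_sphere V k. \<forall>z\<in>nonneg_unit_sphere V k.
           A_alpha_form \<alpha> E k z \<le> A_alpha_form \<alpha> E k y"
proof (rule continuous_attains_sup)
  show "compact (nonneg_unit_sphere V k)"
    using compact_nonneg_unit_sphere k_uniform_finite_vertices[OF uniform] \<open>k \<ge> 1\<close> .
  obtain i0 where "i0 \<in> V"
    using \<open>V \<noteq> {}\<close> by blast
  have "(\<Sum>i\<in>V. (if i = i0 then 1 else 0 :: real) ^ k) = (\<Sum>i\<in>V. if i = i0 then 1 else 0)"
    using \<open>k \<ge> 1\<close> by (intro sum.cong) auto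
  with \<open>i0 \<in> V\<close> have "(\<lambda>i. if i = i0 then 1 else 0) \<in> nonneg_unit_sphere V k"
    using k_uniform_finite_vertices[OF uniform] by (simp add: nonneg_unit_sphere_def)
  then show "nonneg_unit_sphere V k \<noteq> {}" by blast
  show "continuous_on (nonneg_unit_sphere V k) (A_alpha_form \<alpha> E k)"
    unfolding A_alpha_form_def A_alpha_edge_term_def
    by (intro continuous_intros continuous_on_subset[OF continuous_on_product_coordinates subset_UNIV])
qed

lemma A_alpha_form_le_max_mult:
  assumes uniform: "k_uniform k V E" and "k \<ge> 1" and y: "y \<in> nonneg_unit_sphere V k"
    and max: "\<forall>z\<in>nonneg_unit_sphere V k. A_alpha_form \<alpha> E k z \<le> A_alpha_form \<alpha> E k y"
    and w: "\<forall>i\<in>V. 0 \<le> w i"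
  shows "A_alpha_form \<alpha> E k w \<le> A_alpha_form \<alpha> E k y * (\<Sum>i\<in>V. w i ^ k)"
proof -
  define s where "s = (\<Sum>i\<in>V. w i ^ k)"
  have "s \<ge> 0"
    using w by (simp add: s_def sum_nonneg)
  show ?thesis
  proof (cases "s = 0")
    case True
    then have "\<forall>i\<in>V. w i = 0"
      using w \<open>k \<ge> 1\<close> k_uniform_finite_vertices[OF uniform] by (simp add: s_def sum_nonneg_eq_0_iff)
    then have "A_alpha_form \<alpha> E k w = A_alpha_form \<alpha> E k (\<lambda>i. 0 * w i)"
      by (intro A_alpha_form_cong[OF uniform]) simp
    also have "\<dots> = 0"
      using \<open>k \<ge> 1\<close> A_alpha_form_scale[OF uniform, of \<alpha> 0 w] by simp
    finally show ?thesis
      using True by (simp add: s_def)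
  next
    case False
    with \<open>s \<ge> 0\<close> have "s > 0" by simp
    define c where "c = root k s"
    have "c > 0" "c ^ k = s"
      using \<open>s > 0\<close> \<open>k \<ge> 1\<close> by (simp_all add: c_def)
    define z where "z = (\<lambda>i. inverse c * w i)"
    have "(\<Sum>i\<in>V. z i ^ k) = s / c ^ k"
      by (simp add: z_def s_def power_mult_distrib power_inverse sum_divide_distrib field_simps)
    with \<open>c ^ k = s\<close> \<open>s > 0\<close> \<open>c > 0\<close> w
    have "(\<lambda>i. if i \<in> V then z i else 0) \<in> nonneg_unit_sphere V k"
      by (intro restrict_mem_nonneg_unit_sphere) (simp_all add: z_def)
    then have "A_alpha_form \<alpha> E k z \<le> A_alpha_form \<alpha> E k y"
      using max A_alpha_form_cong[OF uniform, of z "\<lambda>i. if i \<in> V then z i else 0"] by simp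
    moreover have "A_alpha_form \<alpha> E k z = A_alpha_form \<alpha> E k w / s"
      unfolding z_def A_alpha_form_scale[OF uniform] using \<open>c ^ k = s\<close>
      by (simp add: power_inverse field_simps)
    ultimately show ?thesis
      using \<open>s > 0\<close> by (simp add: s_def divide_le_eq)
  qed
qed

lemma sum_power_fun_upd:
  fixes y :: "'a \<Rightarrow> real"
  assumes "finite V" "j \<in> V"
  shows "(\<Sum>i\<in>V. (y(j := b)) i ^ k) = (\<Sum>i\<in>V. y i ^ k) + (b ^ k - y j ^ k)"
proof -
  have "(\<Sum>i\<in>V - {j}. (y(j := b)) i ^ k) = (\<Sum>i\<in>V - {j}. y i ^ k)"
    by (rule sum.cong) auto
  with assms show ?thesis
    by (simp add: sum.remove[of V j])
qed

text \<open>Perturbing the single coordinate \<open>y\<^sub>j\<close> by \<open>t\<close> and comparing with the maximum gives a function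
  of \<open>t\<close> minimized at \<open>t = 0\<close>; its first-order condition is the \<open>j\<close>-th eigen-equation.\<close>

lemma eigen_equation_of_maximizer:
  assumes uniform: "k_uniform k V E" and "k \<ge> 2" and "\<alpha> < 1"
    and y: "y \<in> nonneg_unit_sphere V k"
    and max: "\<forall>z\<in>nonneg_unit_sphere V k. A_alpha_form \<alpha> E k z \<le> A_alpha_form \<alpha> E k y"
    and "j \<in> V"
  shows "A_alpha_apply \<alpha> E k y j = A_alpha_form \<alpha> E k y * y j ^ (k - 1)"
proof -
  define M where "M = A_alpha_form \<alpha> E k y"
  define d where "d = real (hdegree E j)"
  define P where "P = (\<Sum>e\<in>{e\<in>E. j \<in> e}. prod y (e - {j}))"
  have y_nonneg: "\<forall>i\<in>V. 0 \<le> y i" and y_sum: "(\<Sum>i\<in>V. y i ^ k) = 1"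
    using y by (auto simp: nonneg_unit_sphere_def)
  have "P \<ge> 0"
    unfolding P_def using y_nonneg k_uniform_edge_subset[OF uniform]
    by (intro sum_nonneg prod_nonneg) blast
  have "(M - \<alpha> * d) * ((y j + t) ^ k - y j ^ k) - ((1 - \<alpha>) * real k * P) * t \<ge> 0"
    if "t \<ge> - y j" for t
  proof -
    let ?w = "y(j := y j + t)"
    have "A_alpha_form \<alpha> E k ?w \<le> M * (\<Sum>i\<in>V. ?w i ^ k)"
      unfolding M_def using that y_nonneg \<open>k \<ge> 2\<close>
      by (intro A_alpha_form_le_max_mult[OF uniform _ y max]) auto
    also have "(\<Sum>i\<in>V. ?w i ^ k) = 1 + ((y j + t) ^ k - y j ^ k)"
      using y_sum sum_power_fun_upd[OF k_uniform_finite_vertices[OF uniform] \<open>j \<in> V\<close>] by simp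
    finally show ?thesis
      unfolding A_alpha_form_fun_upd[OF uniform] M_def d_def P_def by (simp add: algebra_simps)
  qed
  then have "(1 - \<alpha>) * real k * P = real k * (M - \<alpha> * d) * y j ^ (k - 1)"
    using y_nonneg \<open>j \<in> V\<close> \<open>k \<ge> 2\<close> \<open>\<alpha> < 1\<close> \<open>P \<ge> 0\<close>
    by (intro power_increment_min_at_zero) auto
  then have "real k * ((1 - \<alpha>) * P) = real k * ((M - \<alpha> * d) * y j ^ (k - 1))"
    by (simp only: mult_ac)
  then have "(1 - \<alpha>) * P = (M - \<alpha> * d) * y j ^ (k - 1)"
    using \<open>k \<ge> 2\<close> by simp
  then show ?thesis
    unfolding A_alpha_apply_def M_def[symmetric] d_def[symmetric] P_def[symmetric]
    by (simp add: algebra_simps)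
qed

lemma A_alpha_form_le_rho_alpha:
  assumes uniform: "k_uniform k V E" and "k \<ge> 2" and "\<alpha> < 1"
    and "\<forall>i\<in>V. 0 \<le> z i" and "(\<Sum>i\<in>V. z i ^ k) = 1"
  shows "A_alpha_form \<alpha> E k z \<le> rho_alpha \<alpha> k V E"
proof -
  have "V \<noteq> {}"
    using assms(5) by auto
  with uniform \<open>k \<ge> 2\<close> obtain y where y: "y \<in> nonneg_unit_sphere V k"
    and max: "\<forall>w\<in>nonneg_unit_sphere V k. A_alpha_form \<alpha> E k w \<le> A_alpha_form \<alpha> E k y"
    using A_alpha_form_attains_max[of k V E \<alpha>] by auto
  have "\<exists>i\<in>V. y i \<noteq> 0"
  proof (rule ccontr)
    assume "\<not> (\<exists>i\<in>V. y i \<noteq> 0)"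
    then have "(\<Sum>i\<in>V. y i ^ k) = 0"
      using \<open>k \<ge> 2\<close> by simp
    with y show False
      by (simp add: nonneg_unit_sphere_def)
  qed
  then have "A_alpha_form \<alpha> E k y \<le> rho_alpha \<alpha> k V E"
    using \<open>k \<ge> 2\<close> eigen_equation_of_maximizer[OF uniform \<open>k \<ge> 2\<close> \<open>\<alpha> < 1\<close> y max]
    by (intro real_eigenpair_le_rho_alpha[OF uniform]) auto
  moreover have "A_alpha_form \<alpha> E k z \<le> A_alpha_form \<alpha> E k y"
    using max restrict_mem_nonneg_unit_sphere[OF assms(4,5)]
      A_alpha_form_cong[OF uniform, of z "\<lambda>i. if i \<in> V then z i else 0"]
    by simp
  ultimately show ?thesis by simp
qed

lemma eigen_equation_of_A_alpha_form_eq_rho_alpha: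
  assumes uniform: "k_uniform k V E" and "k \<ge> 2" and "\<alpha> < 1"
    and "\<forall>i\<in>V. 0 \<le> z i" and "(\<Sum>i\<in>V. z i ^ k) = 1"
    and "A_alpha_form \<alpha> E k z = rho_alpha \<alpha> k V E" and "j \<in> V"
  shows "A_alpha_apply \<alpha> E k z j = rho_alpha \<alpha> k V E * z j ^ (k - 1)"
proof -
  define z0 where "z0 = (\<lambda>i. if i \<in> V then z i else 0)"
  have z0: "z0 \<in> nonneg_unit_sphere V k"
    unfolding z0_def using assms(4,5) by (rule restrict_mem_nonneg_unit_sphere)
  have same: "\<forall>i\<in>V. z i = z0 i"
    by (simp add: z0_def)
  have "\<forall>w\<in>nonneg_unit_sphere V k. A_alpha_form \<alpha> E k w \<le> A_alpha_form \<alpha> E k z0"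
    using A_alpha_form_le_rho_alpha[OF uniform \<open>k \<ge> 2\<close> \<open>\<alpha> < 1\<close>] assms(6)
      A_alpha_form_cong[OF uniform same]
    by (auto simp: nonneg_unit_sphere_def)
  then show ?thesis
    using eigen_equation_of_maximizer[OF uniform \<open>k \<ge> 2\<close> \<open>\<alpha> < 1\<close> z0 _ \<open>j \<in> V\<close>] assms(6,7)
      A_alpha_apply_cong[OF uniform same \<open>j \<in> V\<close>] A_alpha_form_cong[OF uniform same]
    by (simp add: z0_def)
qed

lemma A_alpha_apply_alpha_perron_vector:
  assumes "k_uniform k V E" "k \<ge> 1" "alpha_perron_vector \<alpha> k V E x" "i \<in> V"
  shows "A_alpha_apply \<alpha> E k x i = rho_alpha \<alpha> k V E * x i ^ (k - 1)"
proof -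
  have "tensor_apply (A_alpha_tensor \<alpha> k E) V k x i = rho_alpha \<alpha> k V E * x i ^ (k - 1)"
    using assms(3,4) by (simp add: alpha_perron_vector_def)
  then show ?thesis
    by (simp add: tensor_apply_A_alpha_tensor[OF assms(1,2,4)])
qed

lemma A_alpha_form_alpha_perron_vector:
  assumes uniform: "k_uniform k V E" and "k \<ge> 1" and perron: "alpha_perron_vector \<alpha> k V E x"
  shows "A_alpha_form \<alpha> E k x = rho_alpha \<alpha> k V E"
proof -
  have "A_alpha_form \<alpha> E k x = (\<Sum>i\<in>V. x i * A_alpha_apply \<alpha> E k x i)"
    using sum_mult_A_alpha_apply[OF uniform \<open>k \<ge> 1\<close>] by simp
  also have "\<dots> = (\<Sum>i\<in>V. rho_alpha \<alpha> k V E * x i ^ k)"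
    using \<open>k \<ge> 1\<close> A_alpha_apply_alpha_perron_vector[OF uniform \<open>k \<ge> 1\<close> perron]
    by (intro sum.cong) (simp_all add: power_eq_if)
  also have "\<dots> = rho_alpha \<alpha> k V E"
    using perron by (simp add: alpha_perron_vector_def sum_distrib_left[symmetric])
  finally show ?thesis .
qed

lemma rho_alpha_less_of_form_le:
  assumes uniform: "k_uniform k V E" and uniform': "k_uniform k V E'"
    and "k \<ge> 2" and "\<alpha> < 1" and perron: "alpha_perron_vector \<alpha> k V E x"
    and form: "A_alpha_form \<alpha> E k x \<le> A_alpha_form \<alpha> E' k x"
    and "u \<in> V" and apply_ne: "A_alpha_apply \<alpha> E' k x u \<noteq> A_alpha_apply \<alpha> E k x u"
  shows "rho_alpha \<alpha> k V E < rho_alpha \<alpha> k V E'"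
proof (rule ccontr)
  let ?\<rho> = "rho_alpha \<alpha> k V E" and ?\<rho>' = "rho_alpha \<alpha> k V E'"
  assume "\<not> ?\<rho> < ?\<rho>'"
  have "k \<ge> 1"
    using \<open>k \<ge> 2\<close> by simp
  have x_nonneg: "\<forall>i\<in>V. 0 \<le> x i" and x_norm: "(\<Sum>i\<in>V. x i ^ k) = 1"
    using perron by (auto simp: alpha_perron_vector_def less_imp_le)
  have "?\<rho> = A_alpha_form \<alpha> E k x"
    using A_alpha_form_alpha_perron_vector[OF uniform \<open>k \<ge> 1\<close> perron] by simp
  moreover have "A_alpha_form \<alpha> E' k x \<le> ?\<rho>'"
    by (rule A_alpha_form_le_rho_alpha[OF uniform' \<open>k \<ge> 2\<close> \<open>\<alpha> < 1\<close> x_nonneg x_norm])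
  ultimately have "A_alpha_form \<alpha> E' k x = ?\<rho>'" "?\<rho>' = ?\<rho>"
    using form \<open>\<not> ?\<rho> < ?\<rho>'\<close> by linarith+
  then have "A_alpha_apply \<alpha> E' k x u = ?\<rho> * x u ^ (k - 1)"
    using eigen_equation_of_A_alpha_form_eq_rho_alpha[OF uniform' \<open>k \<ge> 2\<close> \<open>\<alpha> < 1\<close> x_nonneg x_norm
        _ \<open>u \<in> V\<close>] by simp
  with apply_ne show False
    using A_alpha_apply_alpha_perron_vector[OF uniform \<open>k \<ge> 1\<close> perron \<open>u \<in> V\<close>] by simp
qed

section \<open>Moving edges towards a vertex of larger Perron weight\<close>

definition move_edges :: "'a set set \<Rightarrow> 'a \<Rightarrow> ('i \<Rightarrow> 'a) \<Rightarrow> ('i \<Rightarrow> 'a set) \<Rightarrow> 'i set \<Rightarrow> 'a set set"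
  where "move_edges E u v e I = (E - e ` I) \<union> (\<lambda>i. (e i - {v i}) \<union> {u}) ` I"

lemma k_uniform_move_edges:
  assumes uniform: "k_uniform k V E" and "u \<in> V" and edges: "\<forall>i\<in>I. e i \<in> E \<and> u \<notin> e i \<and> v i \<in> e i"
  shows "k_uniform k V (move_edges E u v e I)"
proof -
  have "card ((e i - {v i}) \<union> {u}) = k" "(e i - {v i}) \<union> {u} \<subseteq> V" if "i \<in> I" for i
  proof -
    have "finite (e i)" "card (e i) = k" "e i \<subseteq> V"
      using that edges k_uniform_finite_edge[OF uniform] k_uniform_card_edge[OF uniform]
        k_uniform_edge_subset[OF uniform] by auto
    moreover have "v i \<in> e i" "u \<notin> e i"
      using that edges by auto
    moreover have "card (e i) > 0"
      using \<open>finite (e i)\<close> \<open>v i \<in> e i\<close> by (auto simp: card_gt_0_iff)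
    ultimately show "card ((e i - {v i}) \<union> {u}) = k" "(e i - {v i}) \<union> {u} \<subseteq> V"
      using \<open>u \<in> V\<close> by (auto simp: card_Suc_Diff1)
  qed
  then show ?thesis
    using uniform unfolding move_edges_def k_uniform_def by auto
qed

lemma A_alpha_edge_term_move_vertex_le:
  assumes "finite S" "v \<in> S" "u \<notin> S" "\<forall>j\<in>S. 0 \<le> x j" "x v \<le> x u" "0 \<le> \<alpha>" "\<alpha> \<le> 1"
  shows "A_alpha_edge_term \<alpha> k x S \<le> A_alpha_edge_term \<alpha> k x ((S - {v}) \<union> {u})"
proof -
  have "0 \<le> prod x (S - {v})"
    using assms(4) by (intro prod_nonneg) auto
  then have "\<alpha> * x v ^ k + (1 - \<alpha>) * real k * (x v * prod x (S - {v}))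
      \<le> \<alpha> * x u ^ k + (1 - \<alpha>) * real k * (x u * prod x (S - {v}))"
    using assms by (intro add_mono mult_left_mono power_mono mult_right_mono) auto
  with assms(1-3) show ?thesis
    unfolding A_alpha_edge_term_def by (simp add: sum.remove[of S v] prod.remove[of S v] algebra_simps)
qed

lemma A_alpha_form_move_edges_ge:
  assumes uniform: "k_uniform k V E" and "finite I" and "inj_on e I"
    and "inj_on (\<lambda>i. (e i - {v i}) \<union> {u}) I"
    and edges: "\<forall>i\<in>I. e i \<in> E \<and> u \<notin> e i \<and> v i \<in> e i"
    and new: "\<forall>i\<in>I. (e i - {v i}) \<union> {u} \<notin> E"
    and x: "\<forall>i\<in>V. 0 \<le> x i" "\<forall>i\<in>I. x (v i) \<le> x u" and "0 \<le> \<alpha>" "\<alpha> \<le> 1"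
  shows "A_alpha_form \<alpha> E k x \<le> A_alpha_form \<alpha> (move_edges E u v e I) k x"
proof -
  let ?g = "A_alpha_edge_term \<alpha> k x"
  have "A_alpha_form \<alpha> E k x = sum ?g (E - e ` I) + (\<Sum>i\<in>I. ?g (e i))"
    using edges \<open>inj_on e I\<close> k_uniform_finite_edges[OF uniform]
    by (simp add: A_alpha_form_def sum.subset_diff[of "e ` I" E] image_subset_iff sum.reindex)
  also have "\<dots> \<le> sum ?g (E - e ` I) + (\<Sum>i\<in>I. ?g ((e i - {v i}) \<union> {u}))"
  proof (intro add_left_mono sum_mono A_alpha_edge_term_move_vertex_le)
    fix i assume "i \<in> I"
    then show "finite (e i)" "v i \<in> e i" "u \<notin> e i" "x (v i) \<le> x u" "\<forall>j\<in>e i. 0 \<le> x j"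
      using edges x k_uniform_finite_edge[OF uniform] k_uniform_edge_subset[OF uniform] by blast+
  qed (use assms(9,10) in auto)
  also have "\<dots> = sum ?g (E - e ` I) + sum ?g ((\<lambda>i. (e i - {v i}) \<union> {u}) ` I)"
    using assms(4) by (simp add: sum.reindex)
  also have "\<dots> = A_alpha_form \<alpha> (move_edges E u v e I) k x"
    unfolding A_alpha_form_def move_edges_def
    using new \<open>finite I\<close> k_uniform_finite_edges[OF uniform] by (intro sum.union_disjoint[symmetric]) auto
  finally show ?thesis .
qed

lemma A_alpha_apply_move_edges_gt:
  fixes x :: "'a \<Rightarrow> real"
  assumes uniform: "k_uniform k V E" and "u \<in> V" and "I \<noteq> {}"
    and edges: "\<forall>i\<in>I. e i \<in> E \<and> u \<notin> e i \<and> v i \<in> e i"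
    and new: "\<forall>i\<in>I. (e i - {v i}) \<union> {u} \<notin> E"
    and x: "\<forall>i\<in>V. 0 < x i" and "0 \<le> \<alpha>" "\<alpha> < 1"
  shows "A_alpha_apply \<alpha> E k x u < A_alpha_apply \<alpha> (move_edges E u v e I) k x u"
proof -
  let ?E' = "move_edges E u v e I" and ?N = "(\<lambda>i. (e i - {v i}) \<union> {u}) ` I"
  have uniform': "k_uniform k V ?E'"
    using k_uniform_move_edges[OF uniform \<open>u \<in> V\<close> edges] .
  have incident: "{e \<in> ?E'. u \<in> e} = {e \<in> E. u \<in> e} \<union> ?N"
    using edges by (auto simp: move_edges_def)
  have disjoint: "{e \<in> E. u \<in> e} \<inter> ?N = {}"
    using new by auto
  have finite: "finite {e \<in> E. u \<in> e}" "finite ?N"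
    using k_uniform_finite_edges[OF uniform] k_uniform_finite_edges[OF uniform']
    by (auto simp: move_edges_def)
  have "hdegree ?E' u = hdegree E u + card ?N"
    unfolding hdegree_def incident using finite disjoint by (rule card_Un_disjoint)
  moreover have "(\<Sum>e\<in>{e \<in> ?E'. u \<in> e}. prod x (e - {u}))
      = (\<Sum>e\<in>{e \<in> E. u \<in> e}. prod x (e - {u})) + (\<Sum>e\<in>?N. prod x (e - {u}))"
    unfolding incident using finite disjoint by (rule sum.union_disjoint)
  moreover have "0 < prod x (S - {u})" if "S \<in> ?N" for S
  proof -
    have "S \<subseteq> V"
      using that k_uniform_edge_subset[OF uniform'] by (auto simp: move_edges_def)
    with x show ?thesis
      by (auto intro!: prod_pos)
  qed
  then have "0 < (\<Sum>e\<in>?N. prod x (e - {u}))"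
    using finite \<open>I \<noteq> {}\<close> by (intro sum_pos) auto
  then have "0 < (1 - \<alpha>) * (\<Sum>e\<in>?N. prod x (e - {u}))"
    using \<open>\<alpha> < 1\<close> by simp
  moreover have "0 \<le> \<alpha> * real (card ?N) * x u ^ (k - 1)"
    using \<open>0 \<le> \<alpha>\<close> x \<open>u \<in> V\<close> by (simp add: less_imp_le)
  ultimately show ?thesis
    unfolding A_alpha_apply_def by (simp add: algebra_simps)
qed

text \<open>Likewise \<open>v\<^sub>i \<in> V\<close> follows from
  \<open>v\<^sub>i \<in> e\<^sub>i\<close>.\<close>

theorem theorem4p1:
  fixes V :: "'a set" and E :: "'a set set" and k r :: nat and \<alpha> :: real
    and u :: 'a and v :: "nat \<Rightarrow> 'a" and e :: "nat \<Rightarrow> 'a set" and x :: "'a \<Rightarrow> real"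
  assumes "k \<ge> 2" and "0 \<le> \<alpha>" and "\<alpha> < 1"
    and "k_uniform k V E" and "hconnected V E"
    and "r \<ge> 1" and "u \<in> V" and "\<forall>i\<in>{1..r}. v i \<in> V"
    and "\<forall>i\<in>{1..r}. e i \<in> E" and "inj_on e {1..r}"
    and "\<forall>i\<in>{1..r}. u \<notin> e i \<and> v i \<in> e i"
    and "inj_on (\<lambda>i. (e i - {v i}) \<union> {u}) {1..r}"
    and "\<forall>i\<in>{1..r}. (e i - {v i}) \<union> {u} \<notin> E"
    and "alpha_perron_vector \<alpha> k V E x"
    and "\<forall>i\<in>{1..r}. x u \<ge> x (v i)"
  shows "rho_alpha \<alpha> k V ((E - e ` {1..r}) \<union> (\<lambda>i. (e i - {v i}) \<union> {u}) ` {1..r})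
         > rho_alpha \<alpha> k V E"
proof -
  note uniform = \<open>k_uniform k V E\<close> and perron = \<open>alpha_perron_vector \<alpha> k V E x\<close>
    and e_inj = \<open>inj_on e {1..r}\<close> and moved_inj = \<open>inj_on (\<lambda>i. (e i - {v i}) \<union> {u}) {1..r}\<close>
    and moved_new = \<open>\<forall>i\<in>{1..r}. (e i - {v i}) \<union> {u} \<notin> E\<close>
  have edges: "\<forall>i\<in>{1..r}. e i \<in> E \<and> u \<notin> e i \<and> v i \<in> e i"
    using assms(9,11) by blast
  have x_pos: "\<forall>i\<in>V. 0 < x i"
    using perron by (simp add: alpha_perron_vector_def)
  have "A_alpha_form \<alpha> E k x \<le> A_alpha_form \<alpha> (move_edges E u v e {1..r}) k x"
    by (rule A_alpha_form_move_edges_ge[OF uniform _ e_inj moved_inj edges moved_new])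
      (use x_pos assms(2,3,15) in \<open>auto simp: less_imp_le\<close>)
  moreover have "A_alpha_apply \<alpha> E k x u < A_alpha_apply \<alpha> (move_edges E u v e {1..r}) k x u"
    using \<open>r \<ge> 1\<close> by (intro A_alpha_apply_move_edges_gt[OF uniform \<open>u \<in> V\<close> _ edges moved_new x_pos
        \<open>0 \<le> \<alpha>\<close> \<open>\<alpha> < 1\<close>]) auto
  ultimately have "rho_alpha \<alpha> k V E < rho_alpha \<alpha> k V (move_edges E u v e {1..r})"
    using k_uniform_move_edges[OF uniform \<open>u \<in> V\<close> edges] perron \<open>k \<ge> 2\<close> \<open>\<alpha> < 1\<close> \<open>u \<in> V\<close>
    by (intro rho_alpha_less_of_form_le[OF uniform]) auto
  then show ?thesis
    by (simp add: move_edges_def)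
qed

end
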